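(* As formal power series in $q$ with coefficients Laurent polynomials in $z$, \[ (1-z)(1-z^{-1})\,\overline{S}(z,q)=\sum_{n=0}^\infty\sum_{m=-\infty}^\infty\bigl(\overline{N}(m,n)-\overline{M}(m,n)\bigr)z^mq^n . \]
   Context: Notation: $(a;q)_\infty=\prod_{k\ge0}(1-aq^k)$, $(a;q)_n=(a;q)_\infty/(aq^n;q)_\infty$, and $(a_1,\dots,a_j;q)_n=(a_1;q)_n\cdots(a_j;q)_n$ (also for $n=\infty$). Define \[ \overline{S}(z,q)=\sum_{n=1}^\infty\frac{q^n(-q^{n+1};q)_\infty(q^{n+1};q)_\infty}{(zq^n;q)_\infty(z^{-1}q^n;q)_\infty}. \] The numbers $\overline{N}(m,n)$ (number of overpartitions of $n$ with Dyson rank $m$, the rank being largest part minus number of parts) are defined by \[ \sum_{n\ge0}\sum_{m}\overline{N}(m,n)z^mq^n=\sum_{n=0}^\infty\frac{(-1;q)_n\,q^{n(n+1)/2}}{(zq;q)_n(z^{-1}q;q)_n}, \] and the numbers $\overline{M}(m,n)$ (a residual crank count for overpartitions) are defined by \[ \sum_{n\ge0}\sum_{m}\overline{M}(m,n)z^mq^n=\frac{(-q;q)_\infty(q;q)_\infty}{(zq;q)_\infty(z^{-1}q;q)_\infty}. \] *)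

theory Defs
  imports "HOL-Computational_Algebra.Formal_Power_Series" "HOL-Computational_Algebra.Formal_Laurent_Series"
begin

text \<open>Formal power series in q whose coefficients are formal Laurent series in z
  over the rationals (Laurent polynomials in z embed into this ring).
  Infinite sums and products are limits w.r.t. the standard (q-adic) metric on fps.\<close>

type_synonym qz_series = "rat fls fps"

definition qq :: qz_series where "qq = fps_X"
definition zz :: qz_series where "zz = fps_const fls_X"
definition zinv :: qz_series where "zinv = fps_const fls_X_inv"

definition qpoch :: "qz_series \<Rightarrow> nat \<Rightarrow> qz_series" where
  "qpoch a n = (\<Prod>k<n. 1 - a * qq ^ k)"

definition qpoch_inf :: "qz_series \<Rightarrow> qz_series" where
  "qpoch_inf a = lim (\<lambda>N. qpoch a N)"

definition Sbar :: qz_series where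
  "Sbar = (\<Sum>n. let m = Suc n in
      qq ^ m * qpoch_inf (- (qq ^ (m + 1))) * qpoch_inf (qq ^ (m + 1))
      * inverse (qpoch_inf (zz * qq ^ m) * qpoch_inf (zinv * qq ^ m)))"

definition Nbar_gen :: qz_series where
  "Nbar_gen = (\<Sum>n. qpoch (-1) n * qq ^ (n * (n + 1) div 2)
      * inverse (qpoch (zz * qq) n * qpoch (zinv * qq) n))"

definition Mbar_gen :: qz_series where
  "Mbar_gen = qpoch_inf (- qq) * qpoch_inf qq
      * inverse (qpoch_inf (zz * qq) * qpoch_inf (zinv * qq))"

definition Nbar :: "int \<Rightarrow> nat \<Rightarrow> rat" where
  "Nbar m n = fls_nth (fps_nth Nbar_gen n) m"

definition Mbar :: "int \<Rightarrow> nat \<Rightarrow> rat" where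
  "Mbar m n = fls_nth (fps_nth Mbar_gen n) m"

end

theory Submission
  imports Defs
begin

text \<open>
  Multiply both sides by the unit V = (zq;q)_inf (z^-1 q;q)_inf. Modulo q^K, the rank side
  V * sum_n (-1;q)_n q^(n(n+1)/2) / (zq,z^-1 q;q)_n becomes the polynomial
    L_K = sum_(k<=K) (-1;q)_k q^(k(k+1)/2) (q^(K-k+1);q)_k (zq^(k+1),z^-1 q^(k+1);q)_(K-k),
  since V cancels the denominators, (zq^(k+1);q)_inf agrees with (zq^(k+1);q)_(K-k) modulo q^K,
  and (q^(K-k+1);q)_k is 1 modulo q^(K-k+1) while the k-th term carries q^k. Likewise V * ((1-z)(1-z^-1) S + M) becomes
    R_K = sum_(k<=K) q^k (z,z^-1;q)_k (q^(2k+2);q^2)_(K-k),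
  the term k = 0 coming from M. Both polynomials satisfy
    X_K = (1 - q^(2K)) X_(K-1) + q^K (z,z^-1;q)_K:
  for R_K this is immediate, for L_K the difference of the two sides telescopes in k.
  Hence L_K = R_K for all K, so the two series agree modulo every power of q.
\<close>

section \<open>The finite identity L_K = R_K\<close>

text \<open>For w = z + z^-1 one has (1 - z q^j) (1 - z^-1 q^j) = pair_factor q w j, so
  rank_trunc q w K and crank_trunc q w K are the polynomials L_K and R_K above.\<close>

definition pair_factor :: "'a::comm_ring_1 \<Rightarrow> 'a \<Rightarrow> nat \<Rightarrow> 'a" where
  "pair_factor q w j = 1 - w * q ^ j + q ^ (2 * j)"

definition pair_prod :: "'a::comm_ring_1 \<Rightarrow> 'a \<Rightarrow> nat \<Rightarrow> nat \<Rightarrow> 'a" where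
  "pair_prod q w a m = (\<Prod>j<m. pair_factor q w (a + j))"

definition rank_numer :: "'a::comm_ring_1 \<Rightarrow> nat \<Rightarrow> 'a" where
  "rank_numer q k = (\<Prod>j<k. 1 + q ^ j) * q ^ (k * (k + 1) div 2)"

definition q_falling :: "'a::comm_ring_1 \<Rightarrow> nat \<Rightarrow> nat \<Rightarrow> 'a" where
  "q_falling q n k = (\<Prod>j<k. 1 - q ^ (n - j))"

definition rank_term :: "'a::comm_ring_1 \<Rightarrow> 'a \<Rightarrow> nat \<Rightarrow> nat \<Rightarrow> 'a" where
  "rank_term q w n k = rank_numer q k * q_falling q n k * pair_prod q w (k + 1) (n - k)"

definition rank_trunc :: "'a::comm_ring_1 \<Rightarrow> 'a \<Rightarrow> nat \<Rightarrow> 'a" where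
  "rank_trunc q w n = (\<Sum>k\<le>n. rank_term q w n k)"

definition crank_term :: "'a::comm_ring_1 \<Rightarrow> 'a \<Rightarrow> nat \<Rightarrow> nat \<Rightarrow> 'a" where
  "crank_term q w n k = q ^ k * pair_prod q w 0 k * (\<Prod>j<n - k. 1 - q ^ (2 * (k + 1 + j)))"

definition crank_trunc :: "'a::comm_ring_1 \<Rightarrow> 'a \<Rightarrow> nat \<Rightarrow> 'a" where
  "crank_trunc q w n = (\<Sum>k\<le>n. crank_term q w n k)"

lemma pair_factor_minus_1: "pair_factor q w j - 1 = q ^ j * (q ^ j - w)"
  unfolding pair_factor_def mult_2 power_add by (simp add: algebra_simps)

lemma pair_prod_Suc: "pair_prod q w a (Suc m) = pair_prod q w a m * pair_factor q w (a + m)"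
  by (simp add: pair_prod_def)

lemma pair_prod_Suc': "pair_prod q w a (Suc m) = pair_factor q w a * pair_prod q w (Suc a) m"
  unfolding pair_prod_def prod.lessThan_Suc_shift by simp

lemma rank_numer_Suc: "rank_numer q (Suc k) = rank_numer q k * (1 + q ^ k) * q ^ Suc k"
proof -
  have "Suc k * (Suc k + 1) div 2 = k * (k + 1) div 2 + Suc k"
    by (induct k) auto
  then show ?thesis
    by (simp add: rank_numer_def power_add algebra_simps)
qed

lemma q_falling_Suc: "q_falling q n (Suc k) = q_falling q n k * (1 - q ^ (n - k))"
  by (simp add: q_falling_def)

lemma q_falling_shift:
  "(1 - q ^ Suc n) * q_falling q n k = q_falling q (Suc n) k * (1 - q ^ (Suc n - k))"
proof (induct k)
  case (Suc k)
  have "(1 - q ^ Suc n) * q_falling q n (Suc k) = (1 - q ^ Suc n) * q_falling q n k * (1 - q ^ (n - k))"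
    by (simp add: q_falling_Suc mult.assoc)
  also have "\<dots> = q_falling q (Suc n) k * (1 - q ^ (Suc n - k)) * (1 - q ^ (n - k))"
    by (simp only: Suc)
  also have "\<dots> = q_falling q (Suc n) (Suc k) * (1 - q ^ (Suc n - Suc k))"
    by (simp add: q_falling_Suc)
  finally show ?case .
qed (simp add: q_falling_def)

lemma q_falling_eq_0: "n < k \<Longrightarrow> q_falling q n k = 0"
  unfolding q_falling_def by (rule prod_zero) (auto intro!: bexI[of _ n])

lemma rank_term_eq_0: "n < k \<Longrightarrow> rank_term q w n k = 0"
  by (simp add: rank_term_def q_falling_eq_0)

lemma rank_term_Suc_factor:
  assumes "k \<le> n"
  shows "rank_term q w (Suc n) k
    = rank_numer q k * q_falling q (Suc n) k * pair_prod q w (k + 1) (n - k) * pair_factor q w (Suc n)"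
proof -
  from assms have "Suc n - k = Suc (n - k)" and "k + 1 + (n - k) = Suc n" by simp_all
  then show ?thesis
    unfolding rank_term_def by (simp only: pair_prod_Suc) (simp add: mult.assoc)
qed

lemma one_minus_q_square_mult_rank_term:
  "(1 - q ^ (2 * Suc n)) * rank_term q w n k
    = rank_numer q k * q_falling q (Suc n) k * pair_prod q w (k + 1) (n - k)
      * (1 - q ^ (Suc n - k)) * (1 + q ^ Suc n)"
proof -
  have "(1 - q ^ (2 * Suc n)) * rank_term q w n k
      = (1 + q ^ Suc n) * rank_numer q k * ((1 - q ^ Suc n) * q_falling q n k) * pair_prod q w (k + 1) (n - k)"
    unfolding rank_term_def mult_2 power_add by (simp add: algebra_simps)
  then show ?thesis
    unfolding q_falling_shift by (simp add: ac_simps)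
qed

lemma pair_factor_mult_rank_term_Suc_Suc:
  assumes "k \<le> n"
  shows "q ^ (n - k) * pair_factor q w (Suc k) * rank_term q w (Suc n) (Suc k)
    = rank_numer q k * q_falling q (Suc n) k * pair_prod q w (k + 1) (n - k)
      * (1 + q ^ k) * q ^ Suc n * (1 - q ^ (Suc n - k)) * pair_factor q w (Suc n)"
proof -
  have powers: "q ^ (n - k) * q ^ Suc k = q ^ Suc n"
    using assms unfolding power_add[symmetric] by simp
  from assms have "k + 1 + (n - k) = Suc n" by simp
  then have shifted: "pair_factor q w (Suc k) * pair_prod q w (Suc k + 1) (n - k)
      = pair_prod q w (k + 1) (n - k) * pair_factor q w (Suc n)"
    by (simp add: pair_prod_Suc'[symmetric] pair_prod_Suc)
  have "q ^ (n - k) * pair_factor q w (Suc k) * rank_term q w (Suc n) (Suc k)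
      = rank_numer q (Suc k) * q_falling q (Suc n) (Suc k) * q ^ (n - k)
        * (pair_factor q w (Suc k) * pair_prod q w (Suc k + 1) (n - k))"
    by (simp add: rank_term_def ac_simps)
  also have "\<dots> = rank_numer q k * q_falling q (Suc n) k * pair_prod q w (k + 1) (n - k)
      * (1 + q ^ k) * (q ^ (n - k) * q ^ Suc k) * (1 - q ^ (Suc n - k)) * pair_factor q w (Suc n)"
    unfolding shifted rank_numer_Suc q_falling_Suc by (simp only: mult_ac)
  finally show ?thesis
    unfolding powers .
qed

text \<open>The four terms share the factor
  rank_numer q k * q_falling q (n + 1) k * pair_prod q w (k + 1) (n - k) * pair_factor q w (n + 1);
  what remains is a polynomial identity in u = q^(n + 1 - k), x = q^k and w.\<close>

lemma rank_term_telescope: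
  assumes "k \<le> n"
  shows "pair_factor q w (Suc n) * (rank_term q w (Suc n) k - (1 - q ^ (2 * Suc n)) * rank_term q w n k)
    = q ^ (Suc n - k) * pair_factor q w k * rank_term q w (Suc n) k
      - q ^ (Suc n - Suc k) * pair_factor q w (Suc k) * rank_term q w (Suc n) (Suc k)"
proof -
  define G where "G = rank_numer q k * q_falling q (Suc n) k * pair_prod q w (k + 1) (n - k)"
  define u where "u = q ^ (Suc n - k)"
  define x where "x = q ^ k"
  have qN: "q ^ Suc n = u * x"
    using assms by (simp add: u_def x_def power_add[symmetric])
  have square: "q ^ (2 * Suc n) = (u * x) ^ 2"
    by (simp only: qN[symmetric] power_mult[symmetric] mult.commute)
  have phN: "pair_factor q w (Suc n) = 1 - w * (u * x) + (u * x) ^ 2"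
    by (simp only: pair_factor_def square qN)
  have phk: "pair_factor q w k = 1 - w * x + x ^ 2"
    by (simp add: pair_factor_def x_def power_mult[symmetric] mult.commute)
  have key: "pair_factor q w (Suc n) - (1 - u) * (1 + u * x)
      = u * pair_factor q w k - (1 + x) * (u * x) * (1 - u)"
    unfolding phN phk by (simp add: algebra_simps power2_eq_square)
  show ?thesis
    unfolding rank_term_Suc_factor[OF assms] one_minus_q_square_mult_rank_term
      diff_Suc_Suc pair_factor_mult_rank_term_Suc_Suc[OF assms]
    unfolding G_def[symmetric] u_def[symmetric] x_def[symmetric] qN
    using arg_cong[OF key, of "\<lambda>t. G * pair_factor q w (Suc n) * t"] by (simp add: algebra_simps)
qed

lemma rank_trunc_Suc:
  fixes q w :: "'a::idom"
  assumes nonzero: "pair_factor q w (Suc n) \<noteq> 0"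
  shows "rank_trunc q w (Suc n)
    = (1 - q ^ (2 * Suc n)) * rank_trunc q w n + q ^ Suc n * pair_prod q w 0 (Suc n)"
proof -
  define N where "N = Suc n"
  define g where "g k = q ^ (N - k) * pair_factor q w k * rank_term q w N k" for k
  have step: "pair_factor q w N * (rank_term q w N k - (1 - q ^ (2 * N)) * rank_term q w n k)
      = g k - g (Suc k)" if "k \<le> N" for k
  proof (cases "k \<le> n")
    case True
    show ?thesis unfolding g_def N_def by (rule rank_term_telescope[OF True])
  next
    case False
    with that have "k = N" by (simp add: N_def)
    then show ?thesis by (simp add: g_def rank_term_eq_0 N_def)
  qed
  have lower: "(\<Sum>k\<le>N. rank_term q w n k) = rank_trunc q w n"
    by (simp add: N_def rank_trunc_def rank_term_eq_0)
  have "pair_factor q w N * (rank_trunc q w N - (1 - q ^ (2 * N)) * rank_trunc q w n)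
      = (\<Sum>k\<le>N. pair_factor q w N * (rank_term q w N k - (1 - q ^ (2 * N)) * rank_term q w n k))"
    unfolding lower[symmetric] rank_trunc_def[of q w N]
    by (simp add: sum_distrib_left sum_subtractf right_diff_distrib)
  also have "\<dots> = (\<Sum>k\<le>N. g k - g (Suc k))"
    by (rule sum.cong) (simp_all add: step)
  also have "\<dots> = g 0 - g (Suc N)"
    by (simp add: lessThan_Suc_atMost[symmetric] sum_lessThan_telescope')
  also have "\<dots> = q ^ N * pair_prod q w 0 (Suc N)"
    by (simp add: g_def rank_term_eq_0 rank_term_def rank_numer_def q_falling_def pair_prod_Suc')
  also have "\<dots> = pair_factor q w N * (q ^ N * pair_prod q w 0 N)"
    by (simp add: pair_prod_Suc)
  finally have "rank_trunc q w N - (1 - q ^ (2 * N)) * rank_trunc q w n = q ^ N * pair_prod q w 0 N"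
    using nonzero by (simp add: N_def)
  then show ?thesis
    unfolding N_def by (simp add: diff_eq_eq add.commute)
qed

lemma crank_trunc_Suc:
  "crank_trunc q w (Suc n)
    = (1 - q ^ (2 * Suc n)) * crank_trunc q w n + q ^ Suc n * pair_prod q w 0 (Suc n)"
proof -
  have "crank_term q w (Suc n) k = (1 - q ^ (2 * Suc n)) * crank_term q w n k" if "k \<le> n" for k
  proof -
    from that have "Suc n - k = Suc (n - k)" "k + 1 + (n - k) = Suc n" by simp_all
    then show ?thesis unfolding crank_term_def by (simp only: prod.lessThan_Suc) (simp add: ac_simps)
  qed
  then have "(\<Sum>k\<le>n. crank_term q w (Suc n) k) = (1 - q ^ (2 * Suc n)) * crank_trunc q w n"
    by (simp add: crank_trunc_def sum_distrib_left)
  then show ?thesis by (simp add: crank_trunc_def crank_term_def)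
qed

lemma rank_trunc_eq_crank_trunc:
  fixes q w :: "'a::idom"
  assumes "\<And>n. pair_factor q w (Suc n) \<noteq> 0"
  shows "rank_trunc q w n = crank_trunc q w n"
proof (induct n)
  case 0
  then show ?case
    by (simp add: rank_trunc_def crank_trunc_def rank_term_def crank_term_def rank_numer_def
        q_falling_def pair_prod_def)
next
  case (Suc n)
  then show ?case by (simp add: rank_trunc_Suc[OF assms] crank_trunc_Suc)
qed

section \<open>Power series agreeing up to a given order\<close>

lemma dvd_mult_diff:
  fixes d :: "'a::comm_ring_1"
  assumes "d dvd a - a'" and "d dvd b - b'"
  shows "d dvd a * b - a' * b'"
proof -
  have "a * b - a' * b' = (a - a') * b + a' * (b - b')" by (simp add: algebra_simps)
  with assms show ?thesis by simp
qed

lemma dvd_prod_diff: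
  fixes f g :: "'b \<Rightarrow> 'a::comm_ring_1"
  assumes "\<And>i. i \<in> A \<Longrightarrow> d dvd f i - g i"
  shows "d dvd prod f A - prod g A"
  using assms
proof (induct A rule: infinite_finite_induct)
  case (insert x F)
  then show ?case by (simp add: dvd_mult_diff)
qed simp_all

lemma fps_X_power_dvd_iff:
  "fps_X ^ m dvd (f :: 'a::comm_ring_1 fps) \<longleftrightarrow> (\<forall>i<m. f $ i = 0)"
proof
  assume "fps_X ^ m dvd f"
  then obtain g where "f = fps_X ^ m * g" by (elim dvdE)
  then show "\<forall>i<m. f $ i = 0" by (simp add: fps_X_power_mult_nth)
next
  assume "\<forall>i<m. f $ i = 0"
  then have "fps_cutoff m f = 0" by (simp add: fps_eq_iff)
  then have "f = fps_X ^ m * fps_shift m f" using fps_shift_cutoff'[of m f] by simp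
  then show "fps_X ^ m dvd f" by (rule dvdI)
qed

lemma fps_eq_if_fps_X_power_dvd_diff:
  fixes f g :: "'a::comm_ring_1 fps"
  assumes "\<And>m. fps_X ^ m dvd f - g"
  shows "f = g"
proof (rule fps_ext)
  fix i
  show "f $ i = g $ i"
    using assms[of "Suc i"] unfolding fps_X_power_dvd_iff by simp
qed

lemma fps_nth_0_eq_1_if_fps_X_dvd: "fps_X dvd (f :: 'a::comm_ring_1 fps) - 1 \<Longrightarrow> f $ 0 = 1"
  using fps_X_power_dvd_iff[of 1 "f - 1"] by simp

lemma fps_lim_if_stable:
  fixes f :: "nat \<Rightarrow> 'a::comm_ring_1 fps"
  assumes stable: "\<And>m N. h m \<le> N \<Longrightarrow> fps_X ^ m dvd f N - f (h m)"
  shows "f \<longlonglongrightarrow> lim f" and "h m \<le> N \<Longrightarrow> fps_X ^ m dvd lim f - f N"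
proof -
  have same_nth: "f N $ i = f N' $ i" if "h m \<le> N" "h m \<le> N'" "i < m" for m N N' i
  proof -
    have "fps_X ^ m dvd (f N - f (h m)) - (f N' - f (h m))"
      using stable that by (blast intro: dvd_diff)
    with that show ?thesis by (simp add: fps_X_power_dvd_iff)
  qed
  define g where "g = Abs_fps (\<lambda>i. f (h (Suc i)) $ i)"
  have "f \<longlonglongrightarrow> g"
  proof (rule tendsto_fpsI)
    fix i
    show "eventually (\<lambda>N. f N $ i = g $ i) sequentially"
      unfolding eventually_sequentially g_def using same_nth[of "Suc i"] by auto
  qed
  moreover from this have "lim f = g" by (rule limI)
  ultimately show "f \<longlonglongrightarrow> lim f" by simp
  show "fps_X ^ m dvd lim f - f N" if "h m \<le> N"
    unfolding \<open>lim f = g\<close> fps_X_power_dvd_iff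
  proof (intro allI impI)
    fix i assume "i < m"
    define N' where "N' = max N (h (Suc i))"
    have "g $ i = f N' $ i" using same_nth[of "Suc i" "h (Suc i)" N' i] by (simp add: g_def N'_def)
    also have "\<dots> = f N $ i" using same_nth[of m N' N i] that \<open>i < m\<close> by (simp add: N'_def)
    finally show "(g - f N) $ i = 0" by simp
  qed
qed

lemma suminf_fps_truncation:
  fixes g :: "nat \<Rightarrow> 'a::comm_ring_1 fps"
  assumes "\<And>i. fps_X ^ i dvd g i" and "m \<le> N"
  shows "fps_X ^ m dvd suminf g - (\<Sum>i<N. g i)"
proof -
  define S where "S = (\<lambda>N. \<Sum>i<N. g i)"
  have "fps_X ^ m dvd S N - S m" if "m \<le> N" for m N
  proof -
    have "S N - S m = (\<Sum>i\<in>{m..<N}. g i)"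
      using that sum_diff_nat_ivl[of 0 m N g] by (simp add: S_def atLeast0LessThan)
    also have "fps_X ^ m dvd \<dots>"
      using assms(1) by (intro dvd_sum) (auto intro: dvd_trans[OF le_imp_power_dvd])
    finally show ?thesis .
  qed
  then have "S \<longlonglongrightarrow> lim S" and "fps_X ^ m dvd lim S - S N"
    using fps_lim_if_stable[of id S] assms(2) by simp_all
  moreover from this(1) have "suminf g = lim S"
    unfolding S_def by (intro sums_unique[symmetric]) (simp add: sums_def)
  ultimately show ?thesis by (simp add: S_def)
qed

section \<open>Infinite q-products\<close>

lemma qpoch_add: "qpoch a (m + n) = qpoch a m * qpoch (a * qq ^ m) n"
  by (induct n) (simp_all add: qpoch_def power_add mult.assoc)

lemma qpoch_inf_truncation:
  assumes a: "qq ^ s dvd a" and m: "m \<le> N + s"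
  shows "qq ^ m dvd qpoch_inf a - qpoch a N"
proof -
  have stable: "qq ^ m dvd qpoch a N - qpoch a (m - s)" if "m - s \<le> N" for m N
  proof -
    obtain n where N: "N = (m - s) + n" using \<open>m - s \<le> N\<close> le_Suc_ex by blast
    have "qq ^ m dvd qpoch (a * qq ^ (m - s)) n - (\<Prod>j<n. 1)"
      unfolding qpoch_def
    proof (rule dvd_prod_diff)
      fix j
      have "qq ^ m dvd qq ^ (s + (m - s + j))" by (rule le_imp_power_dvd) simp
      also have "\<dots> dvd a * qq ^ (m - s) * qq ^ j"
        using a by (simp add: power_add mult.assoc mult_dvd_mono)
      finally show "qq ^ m dvd (1 - a * qq ^ (m - s) * qq ^ j) - 1" by simp
    qed
    then have "qq ^ m dvd qpoch a (m - s) * (qpoch (a * qq ^ (m - s)) n - 1)" by simp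
    then show ?thesis unfolding N qpoch_add by (simp add: right_diff_distrib)
  qed
  have "qq ^ m dvd lim (qpoch a) - qpoch a N"
    using fps_lim_if_stable(2)[of "\<lambda>m. m - s" "qpoch a", folded qq_def] stable m by simp
  then show ?thesis by (simp add: qpoch_inf_def)
qed

lemma qpoch_inf_split: "qpoch_inf a = qpoch a m * qpoch_inf (a * qq ^ m)"
proof (rule fps_eq_if_fps_X_power_dvd_diff[where 'a="rat fls", folded qq_def])
  fix K
  have "qq ^ K dvd qpoch_inf a - qpoch a m * qpoch (a * qq ^ m) K"
    using qpoch_inf_truncation[of 0 a K "m + K"] by (simp add: qpoch_add)
  moreover have "qq ^ K dvd qpoch a m * (qpoch_inf (a * qq ^ m) - qpoch (a * qq ^ m) K)"
    using qpoch_inf_truncation[of 0 "a * qq ^ m" K K] by simp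
  ultimately have "qq ^ K dvd (qpoch_inf a - qpoch a m * qpoch (a * qq ^ m) K)
      - qpoch a m * (qpoch_inf (a * qq ^ m) - qpoch (a * qq ^ m) K)"
    by (rule dvd_diff)
  then show "qq ^ K dvd qpoch_inf a - qpoch a m * qpoch_inf (a * qq ^ m)"
    by (simp add: right_diff_distrib)
qed

definition ww :: qz_series where "ww = zz + zinv"

lemma zz_mult_zinv: "zz * zinv = 1"
proof -
  have "fls_X * fls_X_inv = (1 :: rat fls)"
    by (simp add: fls_X_inv_times_conv_shift mult.commute)
  then show ?thesis
    unfolding zz_def zinv_def by (metis fps_const_1_eq_1 fps_const_mult)
qed

lemma pair_factor_zz_zinv: "(1 - zz * qq ^ j) * (1 - zinv * qq ^ j) = pair_factor qq ww j"
proof -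
  have "(1 - zz * qq ^ j) * (1 - zinv * qq ^ j) = 1 - (zz + zinv) * qq ^ j + zz * zinv * (qq ^ j * qq ^ j)"
    by (simp add: algebra_simps)
  then show ?thesis
    by (simp add: zz_mult_zinv pair_factor_def ww_def power_add[symmetric] mult_2)
qed

lemma qpoch_zz_zinv: "qpoch (zz * qq ^ s) N * qpoch (zinv * qq ^ s) N = pair_prod qq ww s N"
  unfolding qpoch_def pair_prod_def prod.distrib[symmetric]
  by (rule prod.cong) (simp_all add: pair_factor_zz_zinv[symmetric] power_add mult.assoc)

lemma qpoch_neg_pos: "qpoch (- (qq ^ s)) N * qpoch (qq ^ s) N = (\<Prod>j<N. 1 - qq ^ (2 * (s + j)))"
  unfolding qpoch_def prod.distrib[symmetric]
proof (rule prod.cong)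
  fix j
  have "(1 - - (qq ^ s) * qq ^ j) * (1 - qq ^ s * qq ^ j) = 1 - qq ^ (s + j) * qq ^ (s + j)"
    by (simp add: power_add algebra_simps)
  then show "(1 - - (qq ^ s) * qq ^ j) * (1 - qq ^ s * qq ^ j) = 1 - qq ^ (2 * (s + j))"
    by (simp add: mult_2 power_add)
qed simp

definition zpair_inf :: "nat \<Rightarrow> qz_series" where
  "zpair_inf s = qpoch_inf (zz * qq ^ s) * qpoch_inf (zinv * qq ^ s)"

text \<open>even_qpoch_inf s = (q^(2s); q^2)_inf, by qpoch_neg_pos.\<close>

definition even_qpoch_inf :: "nat \<Rightarrow> qz_series" where
  "even_qpoch_inf s = qpoch_inf (- (qq ^ s)) * qpoch_inf (qq ^ s)"

lemma zpair_inf_truncation: "m \<le> N + s \<Longrightarrow> qq ^ m dvd zpair_inf s - pair_prod qq ww s N"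
  unfolding zpair_inf_def qpoch_zz_zinv[symmetric]
  by (intro dvd_mult_diff qpoch_inf_truncation[of s]) simp_all

lemma even_qpoch_inf_truncation:
  "m \<le> N + s \<Longrightarrow> qq ^ m dvd even_qpoch_inf s - (\<Prod>j<N. 1 - qq ^ (2 * (s + j)))"
  unfolding even_qpoch_inf_def qpoch_neg_pos[symmetric]
  by (intro dvd_mult_diff qpoch_inf_truncation[of s]) simp_all

lemma zpair_inf_split: "zpair_inf 1 = pair_prod qq ww 1 n * zpair_inf (Suc n)"
  using qpoch_inf_split[of "zz * qq" n] qpoch_inf_split[of "zinv * qq" n] qpoch_zz_zinv[of 1 n]
  by (simp add: zpair_inf_def algebra_simps)

lemma zpair_inf_nth_0: "1 \<le> s \<Longrightarrow> zpair_inf s $ 0 = 1"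
  by (rule fps_nth_0_eq_1_if_fps_X_dvd[where 'a="rat fls", folded qq_def])
    (use zpair_inf_truncation[of 1 0 s] in \<open>simp add: pair_prod_def\<close>)

lemma pair_prod_nth_0: "1 \<le> a \<Longrightarrow> pair_prod qq ww a n $ 0 = 1"
proof (rule fps_nth_0_eq_1_if_fps_X_dvd[where 'a="rat fls", folded qq_def])
  assume "1 \<le> a"
  have "qq dvd pair_prod qq ww a n - (\<Prod>j<n. 1)"
    unfolding pair_prod_def
  proof (rule dvd_prod_diff)
    fix j
    have "pair_factor qq ww (a + j) - 1 = qq ^ (a + j) * (qq ^ (a + j) - ww)"
      by (rule pair_factor_minus_1)
    moreover have "qq dvd qq ^ (a + j)" using \<open>1 \<le> a\<close> by (simp add: dvd_power)
    ultimately show "qq dvd pair_factor qq ww (a + j) - 1" by (simp only: dvd_mult2)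
  qed
  then show "qq dvd pair_prod qq ww a n - 1" by simp
qed

section \<open>Truncating both sides\<close>

lemma power_dvd_rank_numer: "q ^ n dvd rank_numer q n"
proof -
  have "n \<le> n * (n + 1) div 2" by (induct n) auto
  then have "q ^ n dvd q ^ (n * (n + 1) div 2)" by (rule le_imp_power_dvd)
  then show ?thesis unfolding rank_numer_def by (rule dvd_mult)
qed

lemma power_dvd_rank_numer_mult_q_falling:
  assumes "n \<le> K"
  shows "q ^ Suc K dvd rank_numer q n * (1 - q_falling q K n)"
proof -
  have "q ^ (K - n + 1) dvd (\<Prod>j<n. 1) - q_falling q K n"
    unfolding q_falling_def
  proof (rule dvd_prod_diff)
    fix j assume "j \<in> {..<n}"
    then have "q ^ (K - n + 1) dvd q ^ (K - j)" using assms by (intro le_imp_power_dvd) auto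
    then show "q ^ (K - n + 1) dvd 1 - (1 - q ^ (K - j))" by simp
  qed
  then have "q ^ (n + (K - n + 1)) dvd rank_numer q n * (1 - q_falling q K n)"
    unfolding power_add by (intro mult_dvd_mono power_dvd_rank_numer) simp
  with assms show ?thesis by simp
qed

lemma rank_term_truncation:
  assumes "n < K"
  shows "qq ^ K dvd zpair_inf 1 * (rank_numer qq n * inverse (pair_prod qq ww 1 n))
    - rank_term qq ww K n"
proof -
  have "zpair_inf 1 * (rank_numer qq n * inverse (pair_prod qq ww 1 n))
      = rank_numer qq n * zpair_inf (Suc n) * (pair_prod qq ww 1 n * inverse (pair_prod qq ww 1 n))"
    unfolding zpair_inf_split[of n] by (simp only: ac_simps)
  also have "pair_prod qq ww 1 n * inverse (pair_prod qq ww 1 n) = 1"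
    by (rule inverse_mult_eq_1') (simp add: pair_prod_nth_0)
  finally have cancel: "zpair_inf 1 * (rank_numer qq n * inverse (pair_prod qq ww 1 n))
      = rank_numer qq n * zpair_inf (Suc n)" by simp
  have "qq ^ K dvd rank_numer qq n * (1 - q_falling qq K n)"
    using power_dvd_rank_numer_mult_q_falling[of n K qq] assms
    by (auto intro: dvd_trans[OF le_imp_power_dvd])
  moreover have "qq ^ K dvd zpair_inf (Suc n) - pair_prod qq ww (Suc n) (K - n)"
    using assms by (intro zpair_inf_truncation) simp
  ultimately have "qq ^ K dvd rank_numer qq n * zpair_inf (Suc n)
      - (rank_numer qq n * q_falling qq K n) * pair_prod qq ww (Suc n) (K - n)"
    by (intro dvd_mult_diff) (simp_all add: right_diff_distrib)
  then show ?thesis unfolding cancel rank_term_def by simp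
qed

lemma rank_gen_truncation: "qq ^ K dvd zpair_inf 1 * Nbar_gen - rank_trunc qq ww K"
proof -
  define t where "t n = rank_numer qq n * inverse (pair_prod qq ww 1 n)" for n
  have series: "Nbar_gen = suminf t"
    unfolding Nbar_gen_def qpoch_zz_zinv[of 1, unfolded power_one_right] t_def rank_numer_def
    by (simp add: qpoch_def)
  have "qq ^ n dvd t n" for n
    unfolding t_def by (intro dvd_mult2 power_dvd_rank_numer)
  then have "qq ^ K dvd Nbar_gen - (\<Sum>n<K. t n)"
    unfolding series by (intro suminf_fps_truncation[where 'a="rat fls", folded qq_def]) simp_all
  then have head: "qq ^ K dvd zpair_inf 1 * Nbar_gen - (\<Sum>n<K. zpair_inf 1 * t n)"
    unfolding sum_distrib_left[symmetric] right_diff_distrib[symmetric] by (rule dvd_mult)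
  have body: "qq ^ K dvd (\<Sum>n<K. zpair_inf 1 * t n) - (\<Sum>n<K. rank_term qq ww K n)"
    unfolding sum_subtractf[symmetric] t_def by (intro dvd_sum rank_term_truncation) simp
  have tail: "qq ^ K dvd rank_term qq ww K K"
    unfolding rank_term_def by (intro dvd_mult2 power_dvd_rank_numer)
  have "rank_trunc qq ww K = (\<Sum>n<K. rank_term qq ww K n) + rank_term qq ww K K"
    by (simp add: rank_trunc_def lessThan_Suc_atMost[symmetric])
  then have "zpair_inf 1 * Nbar_gen - rank_trunc qq ww K
      = (zpair_inf 1 * Nbar_gen - (\<Sum>n<K. zpair_inf 1 * t n))
        + ((\<Sum>n<K. zpair_inf 1 * t n) - (\<Sum>n<K. rank_term qq ww K n)) - rank_term qq ww K K"
    by simp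
  with head body tail show ?thesis by (simp only: dvd_add dvd_diff)
qed

lemma crank_term_truncation:
  assumes "n < K"
  shows "qq ^ K dvd zpair_inf 1 * pair_factor qq ww 0
      * (qq ^ Suc n * even_qpoch_inf (Suc n + 1) * inverse (zpair_inf (Suc n)))
    - crank_term qq ww K (Suc n)"
proof -
  have "zpair_inf 1 * pair_factor qq ww 0
      * (qq ^ Suc n * even_qpoch_inf (Suc n + 1) * inverse (zpair_inf (Suc n)))
      = qq ^ Suc n * (pair_factor qq ww 0 * pair_prod qq ww 1 n)
        * even_qpoch_inf (Suc n + 1) * (zpair_inf (Suc n) * inverse (zpair_inf (Suc n)))"
    unfolding zpair_inf_split[of n] by (simp only: ac_simps)
  also have "zpair_inf (Suc n) * inverse (zpair_inf (Suc n)) = 1"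
    by (rule inverse_mult_eq_1') (simp add: zpair_inf_nth_0)
  finally have cancel: "zpair_inf 1 * pair_factor qq ww 0
      * (qq ^ Suc n * even_qpoch_inf (Suc n + 1) * inverse (zpair_inf (Suc n)))
      = qq ^ Suc n * pair_prod qq ww 0 (Suc n) * even_qpoch_inf (Suc n + 1)"
    by (simp add: pair_prod_Suc')
  have "qq ^ K dvd qq ^ Suc n * pair_prod qq ww 0 (Suc n) * even_qpoch_inf (Suc n + 1)
      - crank_term qq ww K (Suc n)"
    unfolding crank_term_def right_diff_distrib[symmetric]
    by (intro dvd_mult even_qpoch_inf_truncation) (use assms in simp)
  then show ?thesis unfolding cancel .
qed

lemma zpair_inf_mult_Mbar_gen: "zpair_inf 1 * Mbar_gen = even_qpoch_inf 1"
proof -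
  have "zpair_inf 1 * Mbar_gen = even_qpoch_inf 1 * (zpair_inf 1 * inverse (zpair_inf 1))"
    unfolding Mbar_gen_def even_qpoch_inf_def zpair_inf_def by (simp add: ac_simps)
  also have "zpair_inf 1 * inverse (zpair_inf 1) = 1"
    by (rule inverse_mult_eq_1') (simp add: zpair_inf_nth_0)
  finally show ?thesis by simp
qed

lemma crank_gen_truncation:
  "qq ^ K dvd zpair_inf 1 * ((1 - zz) * (1 - zinv) * Sbar + Mbar_gen) - crank_trunc qq ww K"
proof -
  define c where "c = zpair_inf 1 * pair_factor qq ww 0"
  define t where "t n = qq ^ Suc n * even_qpoch_inf (Suc n + 1) * inverse (zpair_inf (Suc n))" for n
  have series: "Sbar = suminf t"
    unfolding Sbar_def t_def even_qpoch_inf_def zpair_inf_def Let_def by (simp add: mult.assoc)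
  have "qq ^ n dvd t n" for n
    unfolding t_def by (intro dvd_mult2 le_imp_power_dvd) simp
  then have "qq ^ K dvd Sbar - (\<Sum>n<K. t n)"
    unfolding series by (intro suminf_fps_truncation[where 'a="rat fls", folded qq_def]) simp_all
  then have head: "qq ^ K dvd c * Sbar - (\<Sum>n<K. c * t n)"
    unfolding sum_distrib_left[symmetric] right_diff_distrib[symmetric] by (rule dvd_mult)
  have body: "qq ^ K dvd (\<Sum>n<K. c * t n) - (\<Sum>n<K. crank_term qq ww K (Suc n))"
    unfolding sum_subtractf[symmetric] c_def t_def by (intro dvd_sum crank_term_truncation) simp
  have tail: "qq ^ K dvd zpair_inf 1 * Mbar_gen - crank_term qq ww K 0"
    using even_qpoch_inf_truncation[of K K 1] unfolding zpair_inf_mult_Mbar_gen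
    by (simp add: crank_term_def pair_prod_def)
  have "crank_trunc qq ww K = crank_term qq ww K 0 + (\<Sum>n<K. crank_term qq ww K (Suc n))"
    by (simp only: crank_trunc_def lessThan_Suc_atMost[symmetric] sum.lessThan_Suc_shift)
  moreover have "(1 - zz) * (1 - zinv) = pair_factor qq ww 0"
    using pair_factor_zz_zinv[of 0] by simp
  ultimately have "zpair_inf 1 * ((1 - zz) * (1 - zinv) * Sbar + Mbar_gen) - crank_trunc qq ww K
      = (c * Sbar - (\<Sum>n<K. c * t n)) + ((\<Sum>n<K. c * t n) - (\<Sum>n<K. crank_term qq ww K (Suc n)))
        + (zpair_inf 1 * Mbar_gen - crank_term qq ww K 0)"
    by (simp add: c_def algebra_simps)
  with head body tail show ?thesis by (simp only: dvd_add)
qed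

lemma series_identity: "(1 - zz) * (1 - zinv) * Sbar = Nbar_gen - Mbar_gen"
proof -
  have "pair_factor qq ww (Suc n) \<noteq> 0" for n
    using pair_prod_nth_0[of "Suc n" 1] by (auto simp: pair_prod_def)
  then have trunc_eq: "rank_trunc qq ww K = crank_trunc qq ww K" for K
    by (rule rank_trunc_eq_crank_trunc)
  have "zpair_inf 1 * ((1 - zz) * (1 - zinv) * Sbar + Mbar_gen) = zpair_inf 1 * Nbar_gen"
  proof (rule fps_eq_if_fps_X_power_dvd_diff[where 'a="rat fls", folded qq_def])
    fix K
    have "qq ^ K dvd (zpair_inf 1 * ((1 - zz) * (1 - zinv) * Sbar + Mbar_gen) - crank_trunc qq ww K)
        - (zpair_inf 1 * Nbar_gen - rank_trunc qq ww K)"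
      by (intro dvd_diff crank_gen_truncation rank_gen_truncation)
    then show "qq ^ K dvd zpair_inf 1 * ((1 - zz) * (1 - zinv) * Sbar + Mbar_gen) - zpair_inf 1 * Nbar_gen"
      by (simp add: trunc_eq)
  qed
  moreover have "zpair_inf 1 \<noteq> 0"
    using zpair_inf_nth_0[of 1] by auto
  ultimately have "(1 - zz) * (1 - zinv) * Sbar + Mbar_gen = Nbar_gen" by simp
  then show ?thesis by (simp add: eq_diff_eq)
qed

theorem theorem2p1:
  fixes m :: int and n :: nat
  shows "fls_nth (fps_nth ((1 - zz) * (1 - zinv) * Sbar) n) m = Nbar m n - Mbar m n"
  unfolding series_identity Nbar_def Mbar_def by simp

end
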